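(* Let $N = n+1\ge 3$ be odd and let $\boldsymbol{\lambda} = (\lambda_1,\dots,\lambda_N)\in\Lambda_N$. The upward-pointing inner normal vector of the lifted simplex $\Omega_\omega(G^{\mathbf{0}}_{\boldsymbol{\lambda}}) = \operatorname{conv}\{(\mathbf{a},\omega(\mathbf{a}))\mid \mathbf{a}\text{ a vertex of } G^{\mathbf{0}}_{\boldsymbol{\lambda}}\}\subset\mathbb{R}^{N}$ (normalized to have last coordinate $1$) is $\mathbf{x} = (x_1,\dots,x_N)$ where \[ x_k = \begin{cases} \sum_{i=1}^k \lambda_i & \text{if } k < N,\\ 1 & \text{if } k = N.\end{cases} \]
   Context: $\mathbf{e}_1,\dots,\mathbf{e}_n$ is the standard basis of $\mathbb{R}^n$, with $\mathbf{e}_0=\mathbf{e}_N=\mathbf{0}$. For odd $N$, $\Lambda_N = \bigcup_{j=1}^N\Lambda_{j,N}$ with $\Lambda_{j,N} = \{(\lambda_1,\dots,\lambda_N)\mid\lambda_j=0,\ \lambda_i\in\{-1,1\}\text{ for }i\neq j,\ \sum_i\lambda_i=0\}$, and for $\boldsymbol{\lambda}\in\Lambda_{j,N}$, $G^{\mathbf{0}}_{\boldsymbol{\lambda}} = \operatorname{conv}(\{\mathbf{0}\}\cup\{\lambda_i(\mathbf{e}_{i-1}-\mathbf{e}_i)\mid 1\le i\le N,\ i\ne j\})$. The height function is $\omega(\mathbf{0})=0$ and $\omega(\mathbf{a})=1$ for $\mathbf{a}\ne\mathbf{0}$. These simplices are the lower facets of the lifted adjacency polytope $\operatorname{conv}\{(\mathbf{a},\omega(\mathbf{a}))\mid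 \mathbf{a}\in\{\mathbf{0}\}\cup\{\mathbf{e}_i-\mathbf{e}_j\mid\{i,j\}\text{ an edge of the cycle } C_N\}\}$, and "upward-pointing inner normal" refers to this lifted polytope (upward-pointing meaning positive last coordinate). *)

theory Defs
  imports Complex_Main
begin

text \<open>Points of R^m are modelled as functions nat => real whose coordinates are
  indexed by 1..m (other coordinates are 0).  Here N = n+1, points of R^n use
  coordinates 1..N-1, and lifted points in R^N use coordinate N for the height.\<close>

definition conv :: "(nat \<Rightarrow> real) set \<Rightarrow> (nat \<Rightarrow> real) set" where
  "conv S = {p. \<exists>F u. finite F \<and> F \<subseteq> S \<and> F \<noteq> {} \<and> (\<forall>v\<in>F. u v \<ge> 0)
              \<and> sum u F = 1 \<and> p = (\<lambda>k. \<Sum>v\<in>F. u v * v k)}"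

text \<open>Standard basis vector e_i of R^n (n = N-1); e_0 = e_N = 0.\<close>
definition ebas :: "nat \<Rightarrow> nat \<Rightarrow> nat \<Rightarrow> real" where
  "ebas N i = (\<lambda>k. if k = i \<and> 1 \<le> i \<and> i \<le> N - 1 then 1 else 0)"

definition Lambda_j :: "nat \<Rightarrow> nat \<Rightarrow> (nat \<Rightarrow> int) set" where
  "Lambda_j N j = {lam. lam j = 0 \<and> (\<forall>i\<in>{1..N} - {j}. lam i \<in> {-1, 1})
                   \<and> (\<forall>i. i \<notin> {1..N} \<longrightarrow> lam i = 0) \<and> (\<Sum>i=1..N. lam i) = 0}"

definition Lambda :: "nat \<Rightarrow> (nat \<Rightarrow> int) set" where
  "Lambda N = (\<Union>j\<in>{1..N}. Lambda_j N j)"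

definition G_verts :: "nat \<Rightarrow> nat \<Rightarrow> (nat \<Rightarrow> int) \<Rightarrow> (nat \<Rightarrow> real) set" where
  "G_verts N j lam = {\<lambda>k. 0} \<union>
     {(\<lambda>k. of_int (lam i) * (ebas N (i - 1) k - ebas N i k)) | i. i \<in> {1..N} \<and> i \<noteq> j}"

definition G0 :: "nat \<Rightarrow> nat \<Rightarrow> (nat \<Rightarrow> int) \<Rightarrow> (nat \<Rightarrow> real) set" where
  "G0 N j lam = conv (G_verts N j lam)"

definition omega :: "(nat \<Rightarrow> real) \<Rightarrow> real" where
  "omega a = (if a = (\<lambda>k. 0) then 0 else 1)"

definition lift :: "nat \<Rightarrow> (nat \<Rightarrow> real) \<Rightarrow> (nat \<Rightarrow> real)" where
  "lift N a = (\<lambda>k. if k = N then omega a else a k)"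

definition cycle_edge :: "nat \<Rightarrow> nat \<Rightarrow> nat \<Rightarrow> bool" where
  "cycle_edge N i j \<longleftrightarrow> i \<in> {1..N} \<and> j \<in> {1..N} \<and>
     (j = i + 1 \<or> i = j + 1 \<or> (i = N \<and> j = 1) \<or> (i = 1 \<and> j = N))"

definition adj_points :: "nat \<Rightarrow> (nat \<Rightarrow> real) set" where
  "adj_points N = {\<lambda>k. 0} \<union> {(\<lambda>k. ebas N i k - ebas N j k) | i j. cycle_edge N i j}"

definition lifted_polytope :: "nat \<Rightarrow> (nat \<Rightarrow> real) set" where
  "lifted_polytope N = conv (lift N ` adj_points N)"

definition lifted_simplex :: "nat \<Rightarrow> nat \<Rightarrow> (nat \<Rightarrow> int) \<Rightarrow> (nat \<Rightarrow> real) set" where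
  "lifted_simplex N j lam = conv (lift N ` G_verts N j lam)"

definition ip :: "nat \<Rightarrow> (nat \<Rightarrow> real) \<Rightarrow> (nat \<Rightarrow> real) \<Rightarrow> real" where
  "ip N y p = (\<Sum>k=1..N. y k * p k)"

end

theory Submission
  imports Defs
begin

text \<open>With e_0 = e_N = 0, the nonzero points of the adjacency polytope are the vectors
  s (e_{i-1} - e_i) with s = 1 or -1 and 1 \<le> i \<le> N. Pairing such a lifted point with x
  gives s (x_{i-1} - x_i) + 1 = 1 - s lam_i, which is nonnegative and vanishes exactly when
  s = lam_i and i \<noteq> j, i.e. on the vertices of G^0_lam. A functional that is nonnegative on
  the generators of a convex hull vanishes on a convex combination only if it vanishes on every
  generator used, so x cuts out the lifted simplex as a lower face. Conversely, a y with y_N = 1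
  that is constant on the lifted simplex vanishes at the lifted origin, hence satisfies
  y_i - y_{i-1} = lam_i for every i \<noteq> j; walking up from y_0 = 0 and down from y_N = 0
  (as coordinates in R^n) forces y_k = lam_1 + ... + lam_k.\<close>

lemma ip_convex_combination:
  "ip N y (\<lambda>k. \<Sum>v\<in>F. u v * v k) = (\<Sum>v\<in>F. u v * ip N y v)"
proof -
  have "ip N y (\<lambda>k. \<Sum>v\<in>F. u v * v k) = (\<Sum>k=1..N. \<Sum>v\<in>F. y k * (u v * v k))"
    unfolding ip_def by (simp add: sum_distrib_left)
  also have "\<dots> = (\<Sum>v\<in>F. \<Sum>k=1..N. y k * (u v * v k))"
    by (rule sum.swap)
  also have "\<dots> = (\<Sum>v\<in>F. u v * ip N y v)"
    unfolding ip_def by (simp add: sum_distrib_left mult_ac)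
  finally show ?thesis .
qed

lemma subset_conv: "S \<subseteq> conv S"
proof
  fix v assume "v \<in> S"
  then show "v \<in> conv S"
    unfolding conv_def by (intro CollectI exI[of _ "{v}"] exI[of _ "\<lambda>_. 1"]) auto
qed

lemma conv_mono: "S \<subseteq> T \<Longrightarrow> conv S \<subseteq> conv T"
  unfolding conv_def by blast

lemma ip_nonneg_conv:
  assumes "\<forall>v\<in>S. ip N y v \<ge> 0" and "p \<in> conv S"
  shows "ip N y p \<ge> 0"
proof -
  obtain F u where F: "F \<subseteq> S" "\<forall>v\<in>F. u v \<ge> 0" "p = (\<lambda>k. \<Sum>v\<in>F. u v * v k)"
    using assms(2) unfolding conv_def by blast
  have "ip N y p = (\<Sum>v\<in>F. u v * ip N y v)"
    using F(3) ip_convex_combination by simp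
  also have "\<dots> \<ge> 0"
    using F(1,2) assms(1) by (intro sum_nonneg) auto
  finally show ?thesis .
qed

lemma ip_zero_conv:
  assumes "\<forall>v\<in>S. ip N y v = 0" and "p \<in> conv S"
  shows "ip N y p = 0"
proof -
  obtain F u where F: "F \<subseteq> S" "p = (\<lambda>k. \<Sum>v\<in>F. u v * v k)"
    using assms(2) unfolding conv_def by blast
  have "ip N y p = (\<Sum>v\<in>F. u v * ip N y v)"
    using F(2) ip_convex_combination by simp
  also have "\<dots> = 0"
    using F(1) assms(1) by (intro sum.neutral) auto
  finally show ?thesis .
qed

text \<open>Every generator with a nonzero weight lies in the zero set, so dropping the zero
  weights leaves a convex combination of generators from the zero set.\<close>
lemma conv_zero_set_subset:
  assumes nonneg: "\<forall>v\<in>S. ip N y v \<ge> 0" and "p \<in> conv S" and "ip N y p = 0"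
  shows "p \<in> conv {v\<in>S. ip N y v = 0}"
proof -
  obtain F u where F: "finite F" "F \<subseteq> S" "\<forall>v\<in>F. u v \<ge> 0" "sum u F = 1"
      and p: "p = (\<lambda>k. \<Sum>v\<in>F. u v * v k)"
    using assms(2) unfolding conv_def by blast
  have "(\<Sum>v\<in>F. u v * ip N y v) = 0"
    using p assms(3) by (simp add: ip_convex_combination)
  moreover have "\<forall>v\<in>F. u v * ip N y v \<ge> 0"
    using F nonneg by auto
  ultimately have vanish: "\<forall>v\<in>F. u v * ip N y v = 0"
    using sum_nonneg_eq_0_iff[OF F(1), of "\<lambda>v. u v * ip N y v"] by simp
  define F' where "F' = {v\<in>F. u v \<noteq> 0}"
  have "F' \<subseteq> F" and "finite F'"
    using F(1) unfolding F'_def by auto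
  have "sum u F' = 1"
    using F(4) sum.mono_neutral_left[OF F(1) \<open>F' \<subseteq> F\<close>, of u] by (auto simp: F'_def)
  moreover have "p = (\<lambda>k. \<Sum>v\<in>F'. u v * v k)"
    unfolding p by (intro ext sum.mono_neutral_right[OF F(1) \<open>F' \<subseteq> F\<close>]) (auto simp: F'_def)
  moreover have "F' \<subseteq> {v\<in>S. ip N y v = 0}"
    using vanish F(2) by (auto simp: F'_def)
  ultimately show ?thesis
    unfolding conv_def using \<open>finite F'\<close> \<open>F' \<subseteq> F\<close> F(3)
    by (intro CollectI exI[of _ F'] exI[of _ u]) auto
qed

lemma conv_face:
  assumes "\<forall>v\<in>S. ip N y v \<ge> 0"
  shows "{p\<in>conv S. ip N y p = 0} = conv {v\<in>S. ip N y v = 0}"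
proof
  show "{p\<in>conv S. ip N y p = 0} \<subseteq> conv {v\<in>S. ip N y v = 0}"
    using conv_zero_set_subset[OF assms] by blast
  have "conv {v\<in>S. ip N y v = 0} \<subseteq> conv S"
    by (rule conv_mono) blast
  moreover have "ip N y p = 0" if "p \<in> conv {v\<in>S. ip N y v = 0}" for p
    using ip_zero_conv[OF _ that] by blast
  ultimately show "conv {v\<in>S. ip N y v = 0} \<subseteq> {p\<in>conv S. ip N y p = 0}"
    by blast
qed

definition base_coord :: "nat \<Rightarrow> (nat \<Rightarrow> real) \<Rightarrow> nat \<Rightarrow> real" where
  "base_coord N y i = (if 1 \<le> i \<and> i \<le> N - 1 then y i else 0)"

definition edge_vec :: "nat \<Rightarrow> nat \<Rightarrow> nat \<Rightarrow> real" where
  "edge_vec N i = (\<lambda>k. ebas N (i - 1) k - ebas N i k)"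

lemma sum_mult_ebas: "(\<Sum>k=1..N. y k * ebas N i k) = base_coord N y i"
proof -
  have "(\<Sum>k=1..N. y k * ebas N i k) = (\<Sum>k=1..N. if k = i then base_coord N y i else 0)"
    unfolding ebas_def base_coord_def by (intro sum.cong) auto
  also have "\<dots> = base_coord N y i"
    by (auto simp: sum.delta base_coord_def)
  finally show ?thesis .
qed

lemma ebas_0_eq_ebas_N: "ebas N 0 = ebas N N"
  unfolding ebas_def by (intro ext) auto

lemma ip_lift:
  assumes "N \<ge> 1" and "v N = 0"
  shows "ip N y (lift N v) = (\<Sum>k=1..N. y k * v k) + y N * omega v"
proof -
  have "ip N y (lift N v) = (\<Sum>k=1..N. y k * v k + (if k = N then y N * omega v else 0))"
    unfolding ip_def lift_def using assms(2) by (intro sum.cong) auto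
  then show ?thesis
    using assms(1) by (simp add: sum.distrib)
qed

lemma ip_lift_zero: "ip N y (lift N (\<lambda>k. 0)) = 0"
  unfolding ip_def lift_def omega_def by simp

lemma ip_lift_scaled_edge_vec:
  assumes "N \<ge> 1"
  shows "ip N y (lift N (\<lambda>k. c * edge_vec N i k))
    = c * (base_coord N y (i - 1) - base_coord N y i) + y N * omega (\<lambda>k. c * edge_vec N i k)"
proof -
  have "(\<Sum>k=1..N. y k * (c * edge_vec N i k))
      = c * ((\<Sum>k=1..N. y k * ebas N (i - 1) k) - (\<Sum>k=1..N. y k * ebas N i k))"
    unfolding edge_vec_def by (simp add: sum_distrib_left sum_subtractf algebra_simps)
  also have "\<dots> = c * (base_coord N y (i - 1) - base_coord N y i)"
    by (simp only: sum_mult_ebas)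
  moreover have "edge_vec N i N = 0"
    unfolding edge_vec_def ebas_def by auto
  ultimately show ?thesis
    using assms by (simp add: ip_lift)
qed

lemma omega_scaled_edge_vec:
  assumes "N \<ge> 2" and "i \<in> {1..N}" and "c \<noteq> 0"
  shows "omega (\<lambda>k. c * edge_vec N i k) = 1"
proof -
  have "edge_vec N i (if i = N then N - 1 else i) \<noteq> 0"
    using assms(1,2) unfolding edge_vec_def ebas_def by auto
  then show ?thesis
    using assms(3) unfolding omega_def by (metis mult_eq_0_iff)
qed

lemma adj_points_eq_edge_vecs:
  assumes "N \<ge> 2"
  shows "adj_points N
    = {\<lambda>k. 0} \<union> {(\<lambda>k. s * edge_vec N i k) | s i. s \<in> {1, -1} \<and> i \<in> {1..N}}"
    (is "_ = _ \<union> ?E")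
proof -
  have "(\<lambda>k. ebas N a k - ebas N b k) \<in> ?E" if "cycle_edge N a b" for a b
  proof -
    from that consider "b = a + 1" "b \<le> N" | "a = b + 1" "a \<le> N"
      | "a = N" "b = 1" | "a = 1" "b = N"
      unfolding cycle_edge_def by auto
    then show ?thesis
    proof cases
      case 1
      then show ?thesis by (intro CollectI exI[of _ 1] exI[of _ b]) (auto simp: edge_vec_def)
    next
      case 2
      then show ?thesis by (intro CollectI exI[of _ "-1"] exI[of _ a]) (auto simp: edge_vec_def)
    next
      case 3
      then show ?thesis using assms
        by (intro CollectI exI[of _ 1] exI[of _ 1]) (auto simp: edge_vec_def ebas_0_eq_ebas_N)
    next
      case 4
      then show ?thesis using assms
        by (intro CollectI exI[of _ "-1"] exI[of _ 1]) (auto simp: edge_vec_def ebas_0_eq_ebas_N)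
    qed
  qed
  moreover have "v \<in> adj_points N" if "v \<in> ?E" for v
  proof -
    obtain s i where v: "v = (\<lambda>k. s * edge_vec N i k)" and s: "s \<in> {1, -1}" and i: "i \<in> {1..N}"
      using \<open>v \<in> ?E\<close> by blast
    define h where "h = (if i = 1 then N else i - 1)"
    have "ebas N h = ebas N (i - 1)"
      unfolding h_def using ebas_0_eq_ebas_N by auto
    moreover have "cycle_edge N h i" "cycle_edge N i h"
      unfolding h_def cycle_edge_def using assms i by auto
    ultimately show ?thesis
      unfolding adj_points_def v edge_vec_def using s by fastforce
  qed
  ultimately show ?thesis
    unfolding adj_points_def by blast
qed

lemma G_verts_eq_edge_vecs:
  "G_verts N j lam
    = {\<lambda>k. 0} \<union> {(\<lambda>k. of_int (lam i) * edge_vec N i k) | i. i \<in> {1..N} \<and> i \<noteq> j}"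
  unfolding G_verts_def edge_vec_def ..

definition partial_sum :: "(nat \<Rightarrow> int) \<Rightarrow> nat \<Rightarrow> real" where
  "partial_sum lam k = real_of_int (\<Sum>i=1..k. lam i)"

lemma partial_sum_Suc: "partial_sum lam (Suc k) = partial_sum lam k + of_int (lam (Suc k))"
  unfolding partial_sum_def by simp

definition normal_vec :: "nat \<Rightarrow> (nat \<Rightarrow> int) \<Rightarrow> nat \<Rightarrow> real" where
  "normal_vec N lam = (\<lambda>k. if 1 \<le> k \<and> k < N then partial_sum lam k else if k = N then 1 else 0)"

lemma base_coord_normal_vec:
  assumes "(\<Sum>i=1..N. lam i) = 0" and "i \<le> N"
  shows "base_coord N (normal_vec N lam) i = partial_sum lam i"
  using assms unfolding base_coord_def normal_vec_def partial_sum_def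
  by (cases "i = 0"; cases "i = N") auto

lemma ip_normal_vec_scaled_edge_vec:
  assumes "N \<ge> 2" and "(\<Sum>i=1..N. lam i) = 0" and "i \<in> {1..N}" and "s \<noteq> 0"
  shows "ip N (normal_vec N lam) (lift N (\<lambda>k. s * edge_vec N i k)) = 1 - s * of_int (lam i)"
proof -
  have "partial_sum lam i = partial_sum lam (i - 1) + of_int (lam i)"
    using assms(3) partial_sum_Suc[of lam "i - 1"] by simp
  moreover have "normal_vec N lam N = 1"
    unfolding normal_vec_def by simp
  moreover have "base_coord N (normal_vec N lam) (i - 1) = partial_sum lam (i - 1)"
    and "base_coord N (normal_vec N lam) i = partial_sum lam i"
    using assms(3) by (auto intro: base_coord_normal_vec[OF assms(2)])
  ultimately show ?thesis
    using assms by (simp add: ip_lift_scaled_edge_vec omega_scaled_edge_vec algebra_simps)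
qed

lemma Lambda_j_sign:
  assumes "lam \<in> Lambda_j N j" and "i \<in> {1..N}" and "i \<noteq> j"
  shows "lam i = 1 \<or> lam i = -1"
  using assms unfolding Lambda_j_def by auto

lemma Lambda_j_sum: "lam \<in> Lambda_j N j \<Longrightarrow> (\<Sum>i=1..N. lam i) = 0"
  unfolding Lambda_j_def by auto

lemma ip_normal_vec_adj_point:
  assumes "N \<ge> 2" and "lam \<in> Lambda_j N j" and "v \<in> adj_points N"
  shows "ip N (normal_vec N lam) (lift N v) \<ge> 0
    \<and> (ip N (normal_vec N lam) (lift N v) = 0 \<longrightarrow> v \<in> G_verts N j lam)"
proof (cases "v = (\<lambda>k. 0)")
  case True
  then show ?thesis
    by (simp add: ip_lift_zero G_verts_def)
next
  case False
  then obtain s i where v: "v = (\<lambda>k. s * edge_vec N i k)" and s: "s = 1 \<or> s = -1"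
      and i: "i \<in> {1..N}"
    using assms(1,3) by (auto simp: adj_points_eq_edge_vecs)
  have ip_v: "ip N (normal_vec N lam) (lift N v) = 1 - s * of_int (lam i)"
    unfolding v by (rule ip_normal_vec_scaled_edge_vec[OF assms(1) Lambda_j_sum[OF assms(2)] i])
      (use s in auto)
  have lam_j: "lam j = 0"
    using assms(2) unfolding Lambda_j_def by simp
  have lam_i: "lam i = 1 \<or> lam i = -1 \<or> lam i = 0"
    using Lambda_j_sign[OF assms(2) i] lam_j by blast
  have "v \<in> G_verts N j lam" if "s = of_int (lam i)"
  proof -
    have "i \<noteq> j"
      using that s lam_j by auto
    then show ?thesis
      unfolding G_verts_eq_edge_vecs v that using i by blast
  qed
  then show ?thesis
    using ip_v s lam_i by auto
qed

lemma G_verts_in_zero_set: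
  assumes "N \<ge> 2" and "lam \<in> Lambda_j N j" and "v \<in> G_verts N j lam"
  shows "v \<in> adj_points N \<and> ip N (normal_vec N lam) (lift N v) = 0"
proof (cases "v = (\<lambda>k. 0)")
  case True
  then show ?thesis
    by (simp add: ip_lift_zero adj_points_def)
next
  case False
  then obtain i where i: "i \<in> {1..N}" "i \<noteq> j" and v: "v = (\<lambda>k. of_int (lam i) * edge_vec N i k)"
    using assms(3) unfolding G_verts_eq_edge_vecs by blast
  have lam_i: "lam i = 1 \<or> lam i = -1"
    using Lambda_j_sign[OF assms(2) i] .
  have "v \<in> adj_points N"
    unfolding adj_points_eq_edge_vecs[OF assms(1)] v
    by (intro UnI2 CollectI exI[of _ "of_int (lam i)"] exI[of _ i]) (use lam_i i in auto)
  moreover have "ip N (normal_vec N lam) (lift N v) = 1 - of_int (lam i) * of_int (lam i)"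
    unfolding v by (rule ip_normal_vec_scaled_edge_vec[OF assms(1) Lambda_j_sum[OF assms(2)] i(1)])
      (use lam_i in auto)
  ultimately show ?thesis
    using lam_i by auto
qed

lemma lifted_zero_set_normal_vec:
  assumes "N \<ge> 2" and "lam \<in> Lambda_j N j"
  shows "{p \<in> lift N ` adj_points N. ip N (normal_vec N lam) p = 0} = lift N ` G_verts N j lam"
  using ip_normal_vec_adj_point[OF assms] G_verts_in_zero_set[OF assms] by blast

lemma eq_zero_if_steps_constant_except:
  fixes D :: "nat \<Rightarrow> 'a::zero"
  assumes "j \<le> N" and "D 0 = 0" and "D N = 0"
    and steps: "\<And>i. i \<in> {1..N} \<Longrightarrow> i \<noteq> j \<Longrightarrow> D i = D (i - 1)"
    and "k \<le> N"
  shows "D k = 0"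
proof (cases "k < j")
  case True
  then show ?thesis
  proof (induction k)
    case 0
    then show ?case using assms(2) by simp
  next
    case (Suc k)
    then show ?case using steps[of "Suc k"] assms(1) by simp
  qed
next
  case False
  from \<open>k \<le> N\<close> show ?thesis
  proof (induction k rule: inc_induct)
    case base
    then show ?case using assms(3) .
  next
    case (step n)
    then show ?case using steps[of "Suc n"] False by simp
  qed
qed

lemma normal_vec_unique:
  assumes "N \<ge> 2" and "j \<le> N" and "lam \<in> Lambda_j N j"
    and support: "\<forall>k. k \<notin> {1..N} \<longrightarrow> y k = 0" and "y N = 1"
    and const: "\<forall>p\<in>lift N ` G_verts N j lam. ip N y p = c"
  shows "y = normal_vec N lam"
proof -
  have "c = 0"
    using const ip_lift_zero[of N y] by (auto simp: G_verts_def)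
  define D where "D k = base_coord N y k - partial_sum lam k" for k
  have "D i = D (i - 1)" if i: "i \<in> {1..N}" "i \<noteq> j" for i
  proof -
    have lam_i: "lam i = 1 \<or> lam i = -1"
      using Lambda_j_sign[OF assms(3) i] .
    have "(\<lambda>k. of_int (lam i) * edge_vec N i k) \<in> G_verts N j lam"
      unfolding G_verts_eq_edge_vecs using i by blast
    then have "ip N y (lift N (\<lambda>k. of_int (lam i) * edge_vec N i k)) = 0"
      using const \<open>c = 0\<close> by blast
    moreover have "lam i \<noteq> 0"
      using lam_i by auto
    ultimately have "of_int (lam i) * (base_coord N y (i - 1) - base_coord N y i) + 1 = 0"
      using \<open>y N = 1\<close> i(1) assms(1) by (simp add: ip_lift_scaled_edge_vec omega_scaled_edge_vec)
    moreover have "partial_sum lam i = partial_sum lam (i - 1) + of_int (lam i)"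
      using i(1) partial_sum_Suc[of lam "i - 1"] by simp
    ultimately show ?thesis
      unfolding D_def using lam_i by auto
  qed
  moreover have "D 0 = 0" "D N = 0"
    using Lambda_j_sum[OF assms(3)] assms(1) by (auto simp: D_def base_coord_def partial_sum_def)
  ultimately have vanish: "D k = 0" if "k \<le> N" for k
    using eq_zero_if_steps_constant_except[OF assms(2)] that by blast
  have "y k = normal_vec N lam k" for k
  proof (cases "1 \<le> k \<and> k < N")
    case True
    then show ?thesis
      using vanish[of k] by (auto simp: D_def base_coord_def normal_vec_def split: if_split_asm)
  next
    case False
    then show ?thesis
      using support \<open>y N = 1\<close> by (auto simp: normal_vec_def)
  qed
  then show ?thesis ..
qed

theorem corollary5p8:
  fixes N j :: nat and lam :: "nat \<Rightarrow> int"
  assumes "odd N" and "N \<ge> 3" and "j \<in> {1..N}" and "lam \<in> Lambda_j N j"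
  defines "x \<equiv> (\<lambda>k. if 1 \<le> k \<and> k < N then real_of_int (\<Sum>i=1..k. lam i)
                     else if k = N then 1 else 0)"
  shows "x N = 1
    \<and> (\<forall>p\<in>lifted_polytope N. ip N x p \<ge> 0)
    \<and> {p\<in>lifted_polytope N. ip N x p = 0} = lifted_simplex N j lam
    \<and> (\<forall>y. (\<forall>k. k \<notin> {1..N} \<longrightarrow> y k = 0) \<longrightarrow> y N = 1 \<longrightarrow>
           (\<exists>c. \<forall>p\<in>lifted_simplex N j lam. ip N y p = c) \<longrightarrow> y = x)"
proof -
  have "N \<ge> 2" and "j \<le> N"
    using assms(2,3) by auto
  have x: "x = normal_vec N lam"
    unfolding x_def normal_vec_def partial_sum_def ..
  have nonneg: "\<forall>p\<in>lift N ` adj_points N. ip N (normal_vec N lam) p \<ge> 0"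
    using ip_normal_vec_adj_point[OF \<open>N \<ge> 2\<close> assms(4)] by blast
  have "x N = 1"
    unfolding x_def by simp
  moreover have "\<forall>p\<in>lifted_polytope N. ip N x p \<ge> 0"
    unfolding lifted_polytope_def x using ip_nonneg_conv[OF nonneg] by blast
  moreover have "{p\<in>lifted_polytope N. ip N x p = 0} = lifted_simplex N j lam"
    using conv_face[OF nonneg] lifted_zero_set_normal_vec[OF \<open>N \<ge> 2\<close> assms(4)]
    unfolding lifted_polytope_def lifted_simplex_def x by simp
  moreover have "y = x"
    if "\<forall>k. k \<notin> {1..N} \<longrightarrow> y k = 0" and "y N = 1"
      and "\<forall>p\<in>lifted_simplex N j lam. ip N y p = c" for y c
    using normal_vec_unique[OF \<open>N \<ge> 2\<close> \<open>j \<le> N\<close> assms(4) that(1,2)] that(3) subset_conv x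
    unfolding lifted_simplex_def by blast
  ultimately show ?thesis
    by blast
qed

end
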